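(* Let $\rho=\eta[r,\alpha]$ be a qubit state with $r\neq g$, $J$ the closed interval with endpoints $r$ and $1-\lambda r$, and $S(s):=S(\eta[s,\kappa_s])$ for $s\in J$. For $\bar s\in J$ define \[ \xi(\bar s):=\inf\Big\{\sum_jp_jS(s_j):\ (p_j)\text{ a finite probability vector},\ s_j\in J,\ \sum_jp_js_j=\bar s\Big\}. \] Then the infimum is attained with all $s_j\in\{r,1-\lambda r\}$, and \[ \xi(\bar s)=q_{\bar s}S(\rho)+(1-q_{\bar s})\,h(1-\lambda r),\qquad q_{\bar s}=\frac{\bar s+\lambda r-1}{(1+\lambda)r-1}. \] Moreover, $I_{\mathrm{th}}(\rho)=\max_{\bar s\in J}\big[h(\bar s)-\xi(\bar s)\big]$.
   Context: Qubit memory with Hamiltonian $E_0|0\rangle\langle0|+E_1|1\rangle\langle1|$ at temperature $T$; $\lambda=e^{-(E_1-E_0)/k_{\mathrm B}T}$, $g=1/(1+\lambda)$. $\eta[r,\alpha]$ denotes the density matrix $\begin{pmatrix} r&\alpha\\ \alpha^*&1-r\end{pmatrix}$ in the energy basis. $\kappa_s=|\alpha|\frac{\sqrt{(\lambda s+r-1)(\lambda r+s-1)}}{|(\lambda+1)r-1|}$. $h(x)=-x\log_2x-(1-x)\log_2(1-x)$; $S$ is the von Neumann entropy (base 2). The set of states reachable from $\rho$ by thermal operations is $\vartheta(\rho)=\{\eta[s,\beta]: s\in J,\ |\beta|\le\kappa_s\}$. A code is a finite ensemble $\{(p_k,\sigma^{(k)})\}$ with Holevo information $\chi=S(\sum_kp_k\sigma^{(k)})-\sum_kp_kS(\sigma^{(k)})$;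 $I_{\mathrm{th}}(\rho)$ is the supremum of $\chi$ over codes with all codewords in $\vartheta(\rho)$. *)

theory Defs
  imports "HOL-Analysis.Analysis"
begin

text \<open>Qubit operators are 2x2 complex matrices in the energy basis (|0>, |1>),
  indexed by the numeral type 2 (index 1 = |0>, index 2 = |1>).\<close>

type_synonym qmat = "complex ^ 2 ^ 2"

definition eta :: "real \<Rightarrow> complex \<Rightarrow> qmat" where
  "eta r a = (\<chi> i j. if i = 1 then (if j = 1 then complex_of_real r else a)
                       else (if j = 1 then cnj a else complex_of_real (1 - r)))"

definition ent :: "real \<Rightarrow> real" where
  "ent x = (if x \<le> 0 then 0 else - x * log 2 x)"

definition hbin :: "real \<Rightarrow> real" where
  "hbin x = ent x + ent (1 - x)"

text \<open>Eigenvalues of a 2x2 Hermitian matrix M: the two roots of its characteristic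
  polynomial t^2 - tr(M) t + det(M).\<close>
definition eig_plus :: "qmat \<Rightarrow> real" where
  "eig_plus M = (let t = M$1$1 + M$2$2; d = M$1$1 * M$2$2 - M$1$2 * M$2$1
                 in (Re t + sqrt (Re (t\<^sup>2 - 4 * d))) / 2)"

definition eig_minus :: "qmat \<Rightarrow> real" where
  "eig_minus M = (let t = M$1$1 + M$2$2; d = M$1$1 * M$2$2 - M$1$2 * M$2$1
                 in (Re t - sqrt (Re (t\<^sup>2 - 4 * d))) / 2)"

definition vN_entropy :: "qmat \<Rightarrow> real" where
  "vN_entropy M = ent (eig_plus M) + ent (eig_minus M)"

definition kappa :: "real \<Rightarrow> real \<Rightarrow> complex \<Rightarrow> real \<Rightarrow> real" where
  "kappa lam r a s = cmod a * sqrt ((lam * s + r - 1) * (lam * r + s - 1))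
                      / \<bar>(lam + 1) * r - 1\<bar>"

definition Jint :: "real \<Rightarrow> real \<Rightarrow> real set" where
  "Jint lam r = {min r (1 - lam * r) .. max r (1 - lam * r)}"

text \<open>The set vartheta(rho) of states reachable by thermal operations from eta[r, alpha].\<close>
definition reach :: "real \<Rightarrow> real \<Rightarrow> complex \<Rightarrow> qmat set" where
  "reach lam r a = {eta s b | s b. s \<in> Jint lam r \<and> cmod b \<le> kappa lam r a s}"

definition holevo :: "nat \<Rightarrow> (nat \<Rightarrow> real) \<Rightarrow> (nat \<Rightarrow> qmat) \<Rightarrow> real" where
  "holevo n p sig = vN_entropy (\<Sum>k<n. p k *\<^sub>R sig k) - (\<Sum>k<n. p k * vN_entropy (sig k))"

definition prob_vec :: "nat \<Rightarrow> (nat \<Rightarrow> real) \<Rightarrow> bool" where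
  "prob_vec n p \<longleftrightarrow> (\<forall>k<n. 0 \<le> p k) \<and> (\<Sum>k<n. p k) = 1"

definition I_th :: "real \<Rightarrow> real \<Rightarrow> complex \<Rightarrow> real" where
  "I_th lam r a = Sup {holevo n p sig | n p sig.
      prob_vec n p \<and> (\<forall>k<n. sig k \<in> reach lam r a)}"

definition Sfun :: "real \<Rightarrow> real \<Rightarrow> complex \<Rightarrow> real \<Rightarrow> real" where
  "Sfun lam r a s = vN_entropy (eta s (complex_of_real (kappa lam r a s)))"

definition xi :: "real \<Rightarrow> real \<Rightarrow> complex \<Rightarrow> real \<Rightarrow> real" where
  "xi lam r a sb = Inf {(\<Sum>j<n. p j * Sfun lam r a (s j)) | n p s.
      prob_vec n p \<and> (\<forall>j<n. s j \<in> Jint lam r) \<and> (\<Sum>j<n. p j * s j) = sb}"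

end

theory Submission
  imports Defs "HOL-Real_Asymp.Real_Asymp"
begin

text \<open>The entropy of a qubit is a decreasing, concave function of the squared length of its Bloch
  vector. Along J the squared Bloch length of the extremal state eta[s, kappa_s] lies below the
  chord of its endpoint values, so S lies above the chord of S through (r, S(rho)) and
  (1 - lam r, h(1 - lam r)); since S meets that chord at the endpoints, xi is the chord itself.
  For a code with codewords in vartheta(rho), the average state has diagonal entry sbar in J and
  hence entropy at most h(sbar), while each codeword eta[s_k, beta_k] has entropy at least S(s_k);
  so chi is at most h(sbar) - xi(sbar). A three-state code whose coherences cancel on average
  attains this bound for every sbar, so I_th is the maximum of h - xi over J.\<close>

definition xlogx :: "real \<Rightarrow> real" where "xlogx z = z * ln z"

lemma continuous_on_xlogx: "continuous_on {0..} xlogx"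
proof -
  have "continuous (at z within {0..}) xlogx" if "z \<ge> 0" for z
  proof (cases "z = 0")
    case True
    have "(xlogx \<longlongrightarrow> 0) (at_right 0)" unfolding xlogx_def by real_asymp
    then show ?thesis using True by (simp add: continuous_within at_within_Ici_at_right xlogx_def)
  next
    case False
    then have "isCont xlogx z" using that unfolding xlogx_def by (auto intro!: continuous_intros)
    then show ?thesis using continuous_at_imp_continuous_at_within by blast
  qed
  then show ?thesis using continuous_on_eq_continuous_within by auto
qed

lemma has_real_derivative_xlogx: "0 < z \<Longrightarrow> (xlogx has_real_derivative ln z + 1) (at z)"
  unfolding xlogx_def by (auto intro!: derivative_eq_intros)

lemma xlogx_ge: assumes "0 \<le> z" shows "z - 1 \<le> xlogx z"
proof (cases "z = 0")
  case False
  with assms have z: "0 < z" by simp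
  have "- ln z \<le> 1 / z - 1" using ln_le_minus_one[of "1 / z"] z by (simp add: ln_div)
  then have "z * - ln z \<le> z * (1 / z - 1)" using z by (intro mult_left_mono) auto
  then show ?thesis unfolding xlogx_def using z by (simp add: algebra_simps)
qed (simp add: xlogx_def)

lemma ent_eq_xlogx: "0 \<le> z \<Longrightarrow> ent z = - xlogx z / ln 2"
  by (auto simp: ent_def xlogx_def log_def)

lemma xlogx_half: "0 \<le> w \<Longrightarrow> xlogx (w / 2) = xlogx w / 2 - w / 2 * ln 2"
  by (cases "w = 0") (auto simp: xlogx_def ln_div algebra_simps)

lemma convex_on_Icc_if_deriv_mono:
  fixes f f' :: "real \<Rightarrow> real"
  assumes cont: "continuous_on {a..b} f"
    and deriv: "\<And>x. x \<in> {a<..<b} \<Longrightarrow> (f has_real_derivative f' x) (at x)"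
    and mono: "\<And>x y. x \<in> {a<..<b} \<Longrightarrow> y \<in> {a<..<b} \<Longrightarrow> x \<le> y \<Longrightarrow> f' x \<le> f' y"
  shows "convex_on {a..b} f"
proof (rule convex_on_linorderI)
  fix t x y :: real
  assume t: "0 < t" "t < 1" and xy: "x \<in> {a..b}" "y \<in> {a..b}" "x < y"
  define z where "z = (1 - t) * x + t * y"
  have zx: "z - x = t * (y - x)" and yz: "y - z = (1 - t) * (y - x)"
    by (simp_all add: z_def algebra_simps)
  then have xz: "x < z" and zy: "z < y"
    using t xy(3) by (metis diff_gt_0_iff_gt mult_pos_pos)+
  have mvt: "\<exists>\<xi>\<in>{u<..<v}. f v - f u = (v - u) * f' \<xi>"
    if "u < v" "u \<in> {x..y}" "v \<in> {x..y}" for u v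
  proof -
    have "continuous_on {u..v} f"
      using that xy by (auto intro: continuous_on_subset[OF cont])
    moreover have "(f has_real_derivative f' \<xi>) (at \<xi>)" if "u < \<xi>" "\<xi> < v" for \<xi>
      using that \<open>u \<in> {x..y}\<close> \<open>v \<in> {x..y}\<close> xy by (intro deriv) auto
    ultimately show ?thesis
      using MVT[OF \<open>u < v\<close>] by (metis DERIV_unique greaterThanLessThan_iff real_differentiable_def)
  qed
  obtain \<xi> where \<xi>: "\<xi> \<in> {x<..<z}" "f z - f x = (z - x) * f' \<xi>"
    using mvt[of x z] xz zy by auto
  obtain \<eta> where \<eta>: "\<eta> \<in> {z<..<y}" "f y - f z = (y - z) * f' \<eta>"
    using mvt[of z y] xz zy by auto
  have "f' \<xi> \<le> f' \<eta>"
    using \<xi>(1) \<eta>(1) xy by (intro mono) auto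
  then have "(t * (1 - t) * (y - x)) * f' \<xi> \<le> (t * (1 - t) * (y - x)) * f' \<eta>"
    using t xy(3) by (intro mult_left_mono) auto
  then have "(f z - f x) * (1 - t) \<le> (f y - f z) * t"
    unfolding \<xi>(2) \<eta>(2) zx yz by (simp add: algebra_simps)
  then show "f ((1 - t) *\<^sub>R x + t *\<^sub>R y) \<le> (1 - t) * f x + t * f y"
    by (simp add: z_def algebra_simps)
qed simp

lemma artanh_le: fixes y :: real assumes "0 \<le> y" "y < 1" shows "artanh y \<le> y / (1 - y\<^sup>2)"
proof -
  let ?g = "\<lambda>y::real. y / (1 - y\<^sup>2) - artanh y"
  have "?g 0 \<le> ?g y"
  proof (rule DERIV_nonneg_imp_nondecreasing[OF assms(1)])
    fix x :: real assume "0 \<le> x" "x \<le> y"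
    with assms have x: "\<bar>x\<bar> < 1" by simp
    then have ne: "1 - x\<^sup>2 \<noteq> 0" by (metis abs_square_less_1 less_irrefl right_minus_eq)
    have "(?g has_real_derivative 2 * x\<^sup>2 / (1 - x\<^sup>2)\<^sup>2) (at x)"
      apply (rule DERIV_cong)
       apply (rule derivative_eq_intros refl x ne | simp)+
      using ne by (simp add: divide_simps) (simp add: algebra_simps power2_eq_square)
    then show "\<exists>d. (?g has_real_derivative d) (at x) \<and> 0 \<le> d" by auto
  qed
  then show ?thesis by simp
qed

lemma artanh_div_mono:
  fixes y1 y2 :: real assumes "0 < y1" "y1 \<le> y2" "y2 < 1"
  shows "artanh y1 / y1 \<le> artanh y2 / y2"
proof (rule DERIV_nonneg_imp_nondecreasing[OF assms(2)])
  fix y :: real assume "y1 \<le> y" "y \<le> y2"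
  with assms have y: "0 < y" "\<bar>y\<bar> < 1" by auto
  have "((\<lambda>y. artanh y / y) has_real_derivative (y / (1 - y\<^sup>2) - artanh y) / y\<^sup>2) (at y)"
    using DERIV_divide[OF artanh_real_has_field_derivative DERIV_ident, of y] y
    by (simp add: power2_eq_square)
  moreover have "0 \<le> (y / (1 - y\<^sup>2) - artanh y) / y\<^sup>2" using artanh_le[of y] y by simp
  ultimately show "\<exists>d. ((\<lambda>y. artanh y / y) has_real_derivative d) (at y) \<and> 0 \<le> d" by blast
qed

definition xlogx_sym :: "real \<Rightarrow> real" where
  "xlogx_sym x = xlogx (1 + sqrt x) + xlogx (1 - sqrt x)"

lemma continuous_on_xlogx_sym: "continuous_on {0..1} xlogx_sym"
proof -
  have "continuous_on {0..1} (\<lambda>x. xlogx (1 + sqrt x))" "continuous_on {0..1} (\<lambda>x. xlogx (1 - sqrt x))"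
    by (auto intro!: continuous_on_compose2[OF continuous_on_xlogx] continuous_intros)
  then show ?thesis unfolding xlogx_sym_def by (intro continuous_intros)
qed

lemma has_real_derivative_xlogx_sym:
  assumes "0 < x" "x < 1"
  shows "(xlogx_sym has_real_derivative artanh (sqrt x) / sqrt x) (at x)"
proof -
  have "0 < sqrt x" "sqrt x < 1" using assms by auto
  then have y: "0 < sqrt x" "sqrt x < 1" "0 < 1 + sqrt x" "0 < 1 - sqrt x" by linarith+
  have sqrt: "(sqrt has_real_derivative inverse (sqrt x) / 2) (at x)"
    using DERIV_real_sqrt assms by auto
  have "(xlogx_sym has_real_derivative
      (ln (1 + sqrt x) + 1) * (inverse (sqrt x) / 2) + (ln (1 - sqrt x) + 1) * - (inverse (sqrt x) / 2)) (at x)"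
    unfolding xlogx_sym_def using y
    by (intro DERIV_add DERIV_chain2[OF has_real_derivative_xlogx] DERIV_add[OF DERIV_const sqrt, simplified]
          DERIV_diff[OF DERIV_const sqrt, simplified]) (auto intro: add_pos_nonneg)
  moreover have "ln (1 + sqrt x) - ln (1 - sqrt x) = 2 * artanh (sqrt x)"
    using y by (simp add: artanh_def ln_div)
  ultimately show ?thesis
    using y by (simp add: field_simps)
qed

lemma convex_on_xlogx_sym: "convex_on {0..1} xlogx_sym"
  by (rule convex_on_Icc_if_deriv_mono[OF continuous_on_xlogx_sym has_real_derivative_xlogx_sym])
     (auto intro!: artanh_div_mono)

lemma xlogx_sym_nonneg: "0 \<le> x \<Longrightarrow> x \<le> 1 \<Longrightarrow> 0 \<le> xlogx_sym x"
  unfolding xlogx_sym_def using xlogx_ge[of "1 + sqrt x"] xlogx_ge[of "1 - sqrt x"] by auto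

lemma xlogx_sym_mono:
  assumes "0 \<le> x" "x \<le> y" "y \<le> 1" shows "xlogx_sym x \<le> xlogx_sym y"
proof (cases "y = 0")
  case False
  with assms have "0 < y" by simp
  define t where "t = x / y"
  have t: "0 \<le> t" "t \<le> 1" "x = (1 - t) * 0 + t * y" using assms \<open>0 < y\<close> by (auto simp: t_def)
  then have "xlogx_sym x \<le> (1 - t) * xlogx_sym 0 + t * xlogx_sym y"
    using convex_onD[OF convex_on_xlogx_sym, of t 0 y] assms by simp
  also have "\<dots> \<le> xlogx_sym y"
    using t xlogx_sym_nonneg[of y] assms by (simp add: xlogx_sym_def xlogx_def mult_left_le_one_le)
  finally show ?thesis .
qed (use assms in simp)

text \<open>x is the squared length of the Bloch vector, so the eigenvalues are (1 \<plusminus> sqrt x) / 2.\<close>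
definition bloch_entropy :: "real \<Rightarrow> real" where
  "bloch_entropy x = ent ((1 + sqrt x) / 2) + ent ((1 - sqrt x) / 2)"

lemma bloch_entropy_eq_xlogx_sym:
  assumes "0 \<le> x" "x \<le> 1" shows "bloch_entropy x = 1 - xlogx_sym x / (2 * ln 2)"
proof -
  have y: "0 \<le> 1 - sqrt x" "0 \<le> 1 + sqrt x" using assms by simp_all
  have "bloch_entropy x = - xlogx ((1 + sqrt x) / 2) / ln 2 - xlogx ((1 - sqrt x) / 2) / ln 2"
    unfolding bloch_entropy_def using y by (simp add: ent_eq_xlogx)
  also have "\<dots> = 1 - xlogx_sym x / (2 * ln 2)"
    unfolding xlogx_half[OF y(1)] xlogx_half[OF y(2)] xlogx_sym_def by (simp add: field_simps)
  finally show ?thesis .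
qed

lemma concave_on_bloch_entropy: "concave_on {0..1} bloch_entropy"
  unfolding concave_on_def
proof (rule convex_onI)
  fix t x y :: real assume t: "0 < t" "t < 1" and xy: "x \<in> {0..1}" "y \<in> {0..1}"
  define m where "m = (1 - t) * x + t * y"
  have m: "m \<in> {0..1}" using t xy unfolding m_def by (auto intro: convex_bound_le)
  have "xlogx_sym m / (2 * ln 2) \<le> ((1 - t) * xlogx_sym x + t * xlogx_sym y) / (2 * ln 2)"
    using convex_onD[OF convex_on_xlogx_sym, of t x y] t xy by (intro divide_right_mono) (auto simp: m_def)
  moreover have "(1 - t) *\<^sub>R x + t *\<^sub>R y = m" by (simp add: m_def)
  ultimately show "- bloch_entropy ((1 - t) *\<^sub>R x + t *\<^sub>R y) \<le> (1 - t) * - bloch_entropy x + t * - bloch_entropy y"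
    using xy m by (simp add: bloch_entropy_eq_xlogx_sym add_divide_distrib diff_divide_distrib algebra_simps)
qed simp

lemma bloch_entropy_antimono:
  assumes "0 \<le> x" "x \<le> y" shows "bloch_entropy y \<le> bloch_entropy x"
proof -
  have unit: "bloch_entropy w \<le> bloch_entropy z" if "0 \<le> z" "z \<le> w" "w \<le> 1" for z w
  proof -
    have "xlogx_sym z / (2 * ln 2) \<le> xlogx_sym w / (2 * ln 2)"
      using xlogx_sym_mono[OF that] by (intro divide_right_mono) auto
    then show ?thesis using that by (simp add: bloch_entropy_eq_xlogx_sym)
  qed
  have outside: "bloch_entropy w \<le> bloch_entropy z" if "1 \<le> z" "z \<le> w" for z w
  proof -
    define u v where "u = (1 + sqrt z) / 2" and "v = (1 + sqrt w) / 2"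
    have "1 \<le> u" "u \<le> v" using that by (auto simp: u_def v_def)
    then have "u * log 2 u \<le> v * log 2 v" by (intro mult_mono) auto
    moreover have "bloch_entropy z = ent u" "bloch_entropy w = ent v"
      using that by (simp_all add: bloch_entropy_def ent_def u_def v_def)
    ultimately show ?thesis using \<open>1 \<le> u\<close> \<open>u \<le> v\<close> by (simp add: ent_def)
  qed
  show ?thesis
  proof (cases "y \<le> 1")
    case True
    then show ?thesis using unit assms by blast
  next
    case False
    then show ?thesis
      using assms unit[of x 1] outside[of 1 y] outside[of x y] by (cases "x \<le> 1") auto
  qed
qed

lemma bloch_entropy_hbin: "bloch_entropy ((2 * s - 1)\<^sup>2) = hbin s"
proof (cases "0 \<le> 2 * s - 1")
  case True
  then have "sqrt ((2 * s - 1)\<^sup>2) = 2 * s - 1" by simp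
  moreover have "(1 + (2 * s - 1)) / 2 = s" "(1 - (2 * s - 1)) / 2 = 1 - s" by simp_all
  ultimately show ?thesis by (simp only: bloch_entropy_def hbin_def)
next
  case False
  then have "sqrt ((2 * s - 1)\<^sup>2) = 1 - 2 * s" by simp
  moreover have "(1 + (1 - 2 * s)) / 2 = 1 - s" "(1 - (1 - 2 * s)) / 2 = s" by simp_all
  ultimately show ?thesis by (simp only: bloch_entropy_def hbin_def add.commute)
qed


lemma eta_nth [simp]:
  "eta s b $ 1 $ 1 = complex_of_real s" "eta s b $ 1 $ 2 = b"
  "eta s b $ 2 $ 1 = cnj b" "eta s b $ 2 $ 2 = complex_of_real (1 - s)"
  by (simp_all add: eta_def)

lemma vN_entropy_eta: "vN_entropy (eta s b) = bloch_entropy ((2 * s - 1)\<^sup>2 + 4 * (cmod b)\<^sup>2)"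
proof -
  have "b * cnj b = complex_of_real ((cmod b)\<^sup>2)" using complex_norm_square[of b] by simp
  then have "Re ((eta s b $ 1 $ 1 + eta s b $ 2 $ 2)\<^sup>2
               - 4 * (eta s b $ 1 $ 1 * eta s b $ 2 $ 2 - eta s b $ 1 $ 2 * eta s b $ 2 $ 1))
           = (2 * s - 1)\<^sup>2 + 4 * (cmod b)\<^sup>2"
    by (simp add: algebra_simps power2_eq_square)
  then show ?thesis
    by (simp add: vN_entropy_def eig_plus_def eig_minus_def Let_def bloch_entropy_def)
qed

lemma sum_scaleR_eta:
  assumes "(\<Sum>k<n. p k) = (1::real)"
  shows "(\<Sum>k<n. p k *\<^sub>R eta (s k) (b k))
       = eta (\<Sum>k<n. p k * s k) (\<Sum>k<n. complex_of_real (p k) * b k)"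
proof -
  have "(\<Sum>k<n. complex_of_real (p k) * complex_of_real (1 - s k))
      = complex_of_real (\<Sum>k<n. p k) - complex_of_real (\<Sum>k<n. p k * s k)"
    by (simp add: sum_subtractf algebra_simps)
  then show ?thesis
    using assms by (simp add: vec_eq_iff forall_2 scaleR_conv_of_real[where 'a = complex])
qed


lemma continuous_on_hbin: "continuous_on {0..1} hbin"
proof -
  have "continuous_on {0..1} (\<lambda>x. - xlogx x / ln 2 - xlogx (1 - x) / ln 2)"
    by (intro continuous_intros continuous_on_compose2[OF continuous_on_xlogx]) auto
  then show ?thesis
    by (rule continuous_on_cong[THEN iffD1, OF refl, rotated]) (simp add: hbin_def ent_eq_xlogx)
qed

locale thermal_qubit =
  fixes lam r :: real and a :: complex
  assumes lam_pos: "0 < lam" and lam_le_1: "lam \<le> 1"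
    and r_nonneg: "0 \<le> r" and r_le_1: "r \<le> 1"
    and coherence_bound: "(cmod a)\<^sup>2 \<le> r * (1 - r)"
    and not_thermal: "(1 + lam) * r - 1 \<noteq> 0"
begin

definition weight :: "real \<Rightarrow> real" where
  "weight s = (s + lam * r - 1) / ((1 + lam) * r - 1)"

definition chord :: "real \<Rightarrow> real" where
  "chord s = weight s * vN_entropy (eta r a) + (1 - weight s) * hbin (1 - lam * r)"

lemma weight_combination: "s = weight s * r + (1 - weight s) * (1 - lam * r)"
proof -
  have "weight s * ((1 + lam) * r - 1) = s + lam * r - 1" using not_thermal by (simp add: weight_def)
  then show ?thesis by (simp add: algebra_simps)
qed

lemma weight_Jint: assumes "s \<in> Jint lam r" shows "0 \<le> weight s" "weight s \<le> 1"
proof -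
  have "r - (1 - lam * r) = (1 + lam) * r - 1" by (simp add: algebra_simps)
  then show "0 \<le> weight s" "weight s \<le> 1"
    using assms not_thermal unfolding Jint_def weight_def
    by (cases "(1 + lam) * r - 1 > 0"; auto simp: divide_simps split: if_splits)+
qed

lemma endpoints_Jint: "r \<in> Jint lam r" "1 - lam * r \<in> Jint lam r"
  by (auto simp: Jint_def)

lemma Jint_subset: "Jint lam r \<subseteq> {0..1}"
proof -
  have "0 \<le> lam * r" "lam * r \<le> 1" using lam_pos lam_le_1 r_nonneg r_le_1 by (auto simp: mult_le_one)
  then show ?thesis using r_nonneg r_le_1 by (auto simp: Jint_def)
qed

lemma convex_combination_Jint:
  assumes "prob_vec n p" "\<And>j. j < n \<Longrightarrow> s j \<in> Jint lam r"
  shows "(\<Sum>j<n. p j * s j) \<in> Jint lam r"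
  using convex_sum[of "{..<n}" "Jint lam r" p s] assms by (simp add: prob_vec_def Jint_def)

lemma kappa_Jint:
  assumes "s \<in> Jint lam r"
  shows "kappa lam r a s = cmod a * sqrt (weight s * (1 - lam + lam * weight s))"
proof -
  define D where "D = (1 + lam) * r - 1"
  have s: "s = 1 - lam * r + weight s * D" using weight_combination[of s] by (simp add: D_def algebra_simps)
  have "(lam * s + r - 1) * (lam * r + s - 1) = D\<^sup>2 * (weight s * (1 - lam + lam * weight s))"
    by (subst (1 2) s) (simp add: D_def power2_eq_square algebra_simps)
  moreover have "(lam + 1) * r - 1 = D" "D \<noteq> 0" using not_thermal by (simp_all add: D_def)
  ultimately show ?thesis by (simp add: kappa_def real_sqrt_mult)
qed

lemma kappa_squared:
  assumes "s \<in> Jint lam r"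
  shows "(kappa lam r a s)\<^sup>2 = (cmod a)\<^sup>2 * (weight s * (1 - lam + lam * weight s))"
proof -
  have "0 \<le> weight s * (1 - lam + lam * weight s)"
    using weight_Jint[OF assms] lam_pos lam_le_1 by simp
  then show ?thesis using kappa_Jint[OF assms] by (simp add: power_mult_distrib)
qed

lemma weight_endpoints: "weight r = 1" "weight (1 - lam * r) = 0"
  using not_thermal by (simp_all add: weight_def algebra_simps)

lemma kappa_endpoints: "kappa lam r a r = cmod a" "kappa lam r a (1 - lam * r) = 0"
  using kappa_Jint[OF endpoints_Jint(1)] kappa_Jint[OF endpoints_Jint(2)] by (simp_all add: weight_endpoints)

lemma Sfun_endpoints:
  "Sfun lam r a r = vN_entropy (eta r a)" "Sfun lam r a (1 - lam * r) = hbin (1 - lam * r)"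
  using kappa_endpoints bloch_entropy_hbin[of "1 - lam * r"] by (simp_all add: Sfun_def vN_entropy_eta)

text \<open>The squared Bloch length Q of eta[s, kappa_s] falls short of its chord by
  w (1 - w) (4 D^2 + 4 lam |a|^2), where w = weight s and D = (1 + lam) r - 1.\<close>
lemma chord_le_Sfun:
  assumes "s \<in> Jint lam r" shows "chord s \<le> Sfun lam r a s"
proof -
  define w D where "w = weight s" and "D = (1 + lam) * r - 1"
  define Q0 Q1 where "Q0 = (2 * r - 1)\<^sup>2 + 4 * (cmod a)\<^sup>2" and "Q1 = (2 * (1 - lam * r) - 1)\<^sup>2"
  define Q where "Q = (2 * s - 1)\<^sup>2 + 4 * (kappa lam r a s)\<^sup>2"
  have w: "0 \<le> w" "w \<le> 1" using weight_Jint[OF assms] by (simp_all add: w_def)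
  have s: "s = 1 - lam * r + w * D" using weight_combination[of s] by (simp add: w_def D_def algebra_simps)
  have "w * Q0 + (1 - w) * Q1 - Q = w * (1 - w) * (4 * D\<^sup>2 + 4 * lam * (cmod a)\<^sup>2)"
    unfolding Q_def kappa_squared[OF assms, folded w_def] Q0_def Q1_def
    by (subst s) (simp add: D_def power2_eq_square algebra_simps)
  moreover have "0 \<le> w * (1 - w) * (4 * D\<^sup>2 + 4 * lam * (cmod a)\<^sup>2)" using w lam_pos by simp
  ultimately have Q_le: "Q \<le> (1 - (1 - w)) * Q0 + (1 - w) * Q1" by simp
  have Q_nonneg: "0 \<le> Q" by (simp add: Q_def)
  have "Q0 = 1 - 4 * (r * (1 - r) - (cmod a)\<^sup>2)" by (simp add: Q0_def power2_eq_square algebra_simps)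
  moreover have "0 \<le> Q0" by (simp add: Q0_def)
  ultimately have Q0: "Q0 \<in> {0..1}" using coherence_bound by simp
  have "Q1 = 1 - 4 * ((1 - lam * r) * (lam * r))" by (simp add: Q1_def power2_eq_square algebra_simps)
  moreover have "1 - lam * r \<in> {0..1}" using Jint_subset endpoints_Jint(2) by blast
  then have "0 \<le> (1 - lam * r) * (lam * r)" by simp
  moreover have "0 \<le> Q1" by (simp add: Q1_def)
  ultimately have Q1: "Q1 \<in> {0..1}" unfolding atLeastAtMost_iff by linarith
  have "bloch_entropy Q1 = hbin (1 - lam * r)" unfolding Q1_def by (rule bloch_entropy_hbin)
  then have "chord s = (1 - (1 - w)) * bloch_entropy Q0 + (1 - w) * bloch_entropy Q1"
    by (simp add: chord_def w_def Q0_def vN_entropy_eta)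
  also have "\<dots> \<le> bloch_entropy ((1 - (1 - w)) * Q0 + (1 - w) * Q1)"
    using concave_onD[OF concave_on_bloch_entropy, of "1 - w" Q0 Q1] w Q0 Q1 by simp
  also have "\<dots> \<le> bloch_entropy Q" using bloch_entropy_antimono[OF Q_nonneg Q_le] .
  also have "\<dots> = Sfun lam r a s" by (simp add: Q_def Sfun_def vN_entropy_eta)
  finally show ?thesis .
qed

lemma chord_sum:
  assumes "prob_vec n p" shows "(\<Sum>j<n. p j * chord (s j)) = chord (\<Sum>j<n. p j * s j)"
proof -
  define D c where "D = (1 + lam) * r - 1" and "c = (lam * r - 1) / D"
  have p1: "(\<Sum>j<n. p j) = 1" using assms by (simp add: prob_vec_def)
  have weight_affine: "weight x = x / D + c" for x
    unfolding weight_def D_def c_def by (simp add: add_divide_distrib[symmetric] add_diff_eq)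
  have "(\<Sum>j<n. p j * weight (s j)) = (\<Sum>j<n. p j * s j) / D + c * (\<Sum>j<n. p j)"
    by (simp add: weight_affine distrib_left sum.distrib sum_divide_distrib sum_distrib_left mult.commute)
  then have weight_sum: "(\<Sum>j<n. p j * weight (s j)) = weight (\<Sum>j<n. p j * s j)"
    by (simp add: p1 weight_affine)
  have chord_eq: "chord x = hbin (1 - lam * r) + weight x * (vN_entropy (eta r a) - hbin (1 - lam * r))" for x
    by (simp add: chord_def algebra_simps)
  show ?thesis
    by (simp add: chord_eq distrib_left sum.distrib p1 weight_sum[symmetric] sum_distrib_right[symmetric]
                  mult.assoc[symmetric] sum_distrib_left[symmetric])
qed

lemma chord_attained:
  assumes "sb \<in> Jint lam r"
  shows "\<exists>p s. prob_vec 2 p \<and> (\<forall>j<2. s j \<in> {r, 1 - lam * r})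
           \<and> (\<Sum>j<2. p j * s j) = sb \<and> (\<Sum>j<2. p j * Sfun lam r a (s j)) = chord sb"
proof -
  define p :: "nat \<Rightarrow> real" where "p j = (if j = 0 then weight sb else 1 - weight sb)" for j
  define s :: "nat \<Rightarrow> real" where "s j = (if j = 0 then r else 1 - lam * r)" for j
  have "prob_vec 2 p" using weight_Jint[OF assms] by (simp add: prob_vec_def p_def numeral_2_eq_2)
  moreover have "(\<Sum>j<2. p j * s j) = sb"
    using weight_combination[of sb] by (simp add: p_def s_def numeral_2_eq_2)
  moreover have "(\<Sum>j<2. p j * Sfun lam r a (s j)) = chord sb"
    by (simp add: p_def s_def numeral_2_eq_2 Sfun_endpoints chord_def)
  moreover have "\<forall>j<2. s j \<in> {r, 1 - lam * r}" by (simp add: s_def)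
  ultimately show ?thesis by blast
qed

lemma xi_eq_chord:
  assumes "sb \<in> Jint lam r" shows "xi lam r a sb = chord sb"
  unfolding xi_def
proof (rule cInf_eq_minimum)
  obtain p s where "prob_vec 2 p" "\<forall>j<2. s j \<in> {r, 1 - lam * r}" "(\<Sum>j<2. p j * s j) = sb"
    "(\<Sum>j<2. p j * Sfun lam r a (s j)) = chord sb"
    using chord_attained[OF assms] by blast
  then show "chord sb \<in> {\<Sum>j<n. p j * Sfun lam r a (s j) |n p s.
      prob_vec n p \<and> (\<forall>j<n. s j \<in> Jint lam r) \<and> (\<Sum>j<n. p j * s j) = sb}"
    using endpoints_Jint unfolding mem_Collect_eq by (intro exI[of _ 2] exI[of _ p] exI[of _ s]) auto
next
  fix x assume "x \<in> {\<Sum>j<n. p j * Sfun lam r a (s j) |n p s.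
      prob_vec n p \<and> (\<forall>j<n. s j \<in> Jint lam r) \<and> (\<Sum>j<n. p j * s j) = sb}"
  then obtain n p s where x: "x = (\<Sum>j<n. p j * Sfun lam r a (s j))" and p: "prob_vec n p"
    and s: "\<forall>j<n. s j \<in> Jint lam r" and sb: "(\<Sum>j<n. p j * s j) = sb"
    by blast
  have "chord sb = (\<Sum>j<n. p j * chord (s j))" using chord_sum[OF p] sb by simp
  also have "\<dots> \<le> x"
    unfolding x using p s chord_le_Sfun by (intro sum_mono mult_left_mono) (auto simp: prob_vec_def)
  finally show "chord sb \<le> x" .
qed


lemma holevo_le_chord_gap:
  assumes p: "prob_vec n p" and codewords: "\<forall>k<n. sig k \<in> reach lam r a"
  shows "\<exists>sb \<in> Jint lam r. holevo n p sig \<le> hbin sb - chord sb"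
proof -
  from codewords have "\<forall>k<n. \<exists>s b. sig k = eta s b \<and> s \<in> Jint lam r \<and> cmod b \<le> kappa lam r a s"
    by (auto simp: reach_def)
  then obtain s b where sig: "\<And>k. k < n \<Longrightarrow> sig k = eta (s k) (b k)"
    and s: "\<And>k. k < n \<Longrightarrow> s k \<in> Jint lam r"
    and b: "\<And>k. k < n \<Longrightarrow> cmod (b k) \<le> kappa lam r a (s k)"
    by metis
  have p_nonneg: "\<And>k. k < n \<Longrightarrow> 0 \<le> p k" and p_sum: "(\<Sum>k<n. p k) = 1"
    using p by (auto simp: prob_vec_def)
  define sb where "sb = (\<Sum>k<n. p k * s k)"
  have sb: "sb \<in> Jint lam r" unfolding sb_def using convex_combination_Jint[OF p s] .
  have "(\<Sum>k<n. p k *\<^sub>R sig k) = eta sb (\<Sum>k<n. complex_of_real (p k) * b k)"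
    unfolding sb_def sum_scaleR_eta[OF p_sum, symmetric] using sig by simp
  then have "vN_entropy (\<Sum>k<n. p k *\<^sub>R sig k)
      = bloch_entropy ((2 * sb - 1)\<^sup>2 + 4 * (cmod (\<Sum>k<n. complex_of_real (p k) * b k))\<^sup>2)"
    by (simp add: vN_entropy_eta)
  also have "\<dots> \<le> bloch_entropy ((2 * sb - 1)\<^sup>2)" by (rule bloch_entropy_antimono) auto
  finally have average: "vN_entropy (\<Sum>k<n. p k *\<^sub>R sig k) \<le> hbin sb"
    by (simp only: bloch_entropy_hbin)
  have codeword: "Sfun lam r a (s k) \<le> vN_entropy (sig k)" if "k < n" for k
  proof -
    have "(cmod (b k))\<^sup>2 \<le> (kappa lam r a (s k))\<^sup>2" using b[OF that] by (intro power_mono) auto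
    then show ?thesis
      unfolding sig[OF that] Sfun_def vN_entropy_eta by (intro bloch_entropy_antimono) auto
  qed
  have "chord sb = (\<Sum>k<n. p k * chord (s k))" unfolding sb_def using chord_sum[OF p] by simp
  also have "\<dots> \<le> (\<Sum>k<n. p k * vN_entropy (sig k))"
    using chord_le_Sfun[OF s] codeword p_nonneg by (intro sum_mono mult_left_mono) (auto intro: order_trans)
  finally show ?thesis using average sb unfolding holevo_def by (intro bexI[of _ sb]) auto
qed

text \<open>Equality is attained by the code {(q/2, eta[r, a]), (q/2, eta[r, -a]), (1 - q, eta[1 - lam r, 0])}
  with q = weight s0: the coherences cancel in the average.\<close>
lemma holevo_chord_gap_attained:
  assumes "s0 \<in> Jint lam r"
  shows "\<exists>n p sig. prob_vec n p \<and> (\<forall>k<n. sig k \<in> reach lam r a) \<and> holevo n p sig = hbin s0 - chord s0"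
proof -
  define q where "q = weight s0"
  define p :: "nat \<Rightarrow> real" where "p k = (if k = 2 then 1 - q else q / 2)" for k
  define s :: "nat \<Rightarrow> real" where "s k = (if k = 2 then 1 - lam * r else r)" for k
  define b :: "nat \<Rightarrow> complex" where "b k = (if k = 0 then a else if k = 1 then - a else 0)" for k
  define sig where "sig k = eta (s k) (b k)" for k
  have q: "0 \<le> q" "q \<le> 1" using weight_Jint[OF assms] by (simp_all add: q_def)
  have p_sum: "(\<Sum>k<3. p k) = 1" by (simp add: p_def numeral_3_eq_3)
  then have "prob_vec 3 p" using q by (auto simp: prob_vec_def p_def)
  moreover have "eta r a \<in> reach lam r a" "eta r (- a) \<in> reach lam r a"
      "eta (1 - lam * r) 0 \<in> reach lam r a"
    unfolding reach_def using endpoints_Jint kappa_endpoints by force+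
  then have "\<forall>k<3. sig k \<in> reach lam r a"
    by (auto simp: sig_def s_def b_def numeral_3_eq_3 less_Suc_eq)
  moreover have "holevo 3 p sig = hbin s0 - chord s0"
  proof -
    have "(\<Sum>k<3. p k *\<^sub>R sig k) = eta (\<Sum>k<3. p k * s k) (\<Sum>k<3. complex_of_real (p k) * b k)"
      unfolding sig_def by (rule sum_scaleR_eta[OF p_sum])
    also have "\<dots> = eta (q * r + (1 - q) * (1 - lam * r)) 0"
      by (simp add: p_def s_def b_def numeral_3_eq_3 algebra_simps)
    also have "\<dots> = eta s0 0" using weight_combination[of s0] by (simp add: q_def)
    finally have "vN_entropy (\<Sum>k<3. p k *\<^sub>R sig k) = hbin s0"
      by (simp add: vN_entropy_eta bloch_entropy_hbin)
    moreover have "(\<Sum>k<3. p k * vN_entropy (sig k)) = chord s0"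
      using bloch_entropy_hbin[of "1 - lam * r"]
      by (simp add: p_def sig_def s_def b_def chord_def q_def numeral_3_eq_3 vN_entropy_eta algebra_simps)
    ultimately show ?thesis by (simp add: holevo_def)
  qed
  ultimately show ?thesis by blast
qed

lemma I_th_eq_max_chord_gap:
  "\<exists>s0 \<in> Jint lam r. I_th lam r a = hbin s0 - chord s0
      \<and> (\<forall>sb \<in> Jint lam r. hbin sb - chord sb \<le> I_th lam r a)"
proof -
  have "continuous_on (Jint lam r) (\<lambda>s. hbin s - chord s)"
    using continuous_on_subset[OF continuous_on_hbin Jint_subset] not_thermal
    by (auto simp: chord_def weight_def intro!: continuous_intros)
  moreover have "compact (Jint lam r)" "Jint lam r \<noteq> {}"
    using endpoints_Jint by (auto simp: Jint_def)
  ultimately obtain s0 where s0: "s0 \<in> Jint lam r"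
    and max: "\<And>s. s \<in> Jint lam r \<Longrightarrow> hbin s - chord s \<le> hbin s0 - chord s0"
    using continuous_attains_sup[of "Jint lam r" "\<lambda>s. hbin s - chord s"] by blast
  have "I_th lam r a = hbin s0 - chord s0"
    unfolding I_th_def
  proof (rule cSup_eq_maximum)
    show "hbin s0 - chord s0 \<in> {holevo n p sig |n p sig. prob_vec n p \<and> (\<forall>k<n. sig k \<in> reach lam r a)}"
      using holevo_chord_gap_attained[OF s0] by force
  next
    fix x assume "x \<in> {holevo n p sig |n p sig. prob_vec n p \<and> (\<forall>k<n. sig k \<in> reach lam r a)}"
    then show "x \<le> hbin s0 - chord s0" using holevo_le_chord_gap max by force
  qed
  then show ?thesis using s0 max by auto
qed

end

theorem mainTheorem8:
  fixes E0 E1 kB T lam g r :: real and a :: complex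
  assumes "kB > 0" and "T > 0" and "E0 \<le> E1"
    and lam_def: "lam = exp (- (E1 - E0) / (kB * T))"
    and g_def: "g = 1 / (1 + lam)"
    and "0 \<le> r" and "r \<le> 1" and "(cmod a)\<^sup>2 \<le> r * (1 - r)"
    and "r \<noteq> g"
  shows "(\<forall>sb \<in> Jint lam r.
            (\<exists>n p s. prob_vec n p \<and> (\<forall>j<n. s j \<in> {r, 1 - lam * r})
                \<and> (\<Sum>j<n. p j * s j) = sb
                \<and> (\<Sum>j<n. p j * Sfun lam r a (s j)) = xi lam r a sb)
          \<and> xi lam r a sb =
              ((sb + lam * r - 1) / ((1 + lam) * r - 1)) * vN_entropy (eta r a)
              + (1 - (sb + lam * r - 1) / ((1 + lam) * r - 1)) * hbin (1 - lam * r))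
       \<and> (\<exists>s0 \<in> Jint lam r. I_th lam r a = hbin s0 - xi lam r a s0
            \<and> (\<forall>sb \<in> Jint lam r. hbin sb - xi lam r a sb \<le> I_th lam r a))"
proof -
  have "0 < lam" using lam_def by simp
  moreover have "lam \<le> 1"
    using assms(1-3) lam_def by (simp add: divide_nonpos_pos)
  moreover have "(1 + lam) * r - 1 \<noteq> 0"
    using \<open>0 < lam\<close> \<open>r \<noteq> g\<close> g_def by (auto simp: field_simps)
  ultimately interpret thermal_qubit lam r a
    using assms(6-8) by unfold_locales
  show ?thesis
  proof (intro conjI ballI)
    fix sb assume sb: "sb \<in> Jint lam r"
    show "\<exists>n p s. prob_vec n p \<and> (\<forall>j<n. s j \<in> {r, 1 - lam * r}) \<and> (\<Sum>j<n. p j * s j) = sb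
        \<and> (\<Sum>j<n. p j * Sfun lam r a (s j)) = xi lam r a sb"
      using chord_attained[OF sb] unfolding xi_eq_chord[OF sb] by blast
    show "xi lam r a sb = ((sb + lam * r - 1) / ((1 + lam) * r - 1)) * vN_entropy (eta r a)
        + (1 - (sb + lam * r - 1) / ((1 + lam) * r - 1)) * hbin (1 - lam * r)"
      unfolding xi_eq_chord[OF sb] chord_def weight_def ..
  next
    show "\<exists>s0 \<in> Jint lam r. I_th lam r a = hbin s0 - xi lam r a s0
        \<and> (\<forall>sb \<in> Jint lam r. hbin sb - xi lam r a sb \<le> I_th lam r a)"
      using I_th_eq_max_chord_gap xi_eq_chord by simp
  qed
qed

end
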